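(* Let $G$ be a finite simple graph of order $p$, and let $\mathbb{F}$ be a field with $\operatorname{char}\mathbb{F}\neq 2$ such that either $\operatorname{char}\mathbb{F}=0$ or $p<2+\operatorname{char}\mathbb{F}$. Then a linear functional $\lambda$ on $U_G$ is a short functional if and only if there exist an edge $[a,b]$ of $G$ and a nonzero scalar $\alpha\in\mathbb{F}$ such that $\lambda(a)=\lambda(b)=\alpha$ and $\lambda(c)=0$ for every vertex $c\notin\{a,b\}$.
   Context: $G$ has vertex set $VG$ and edge set $EG$; the edge with endpoints $x,y$ is written $[x,y]$, and $x\sim y$ means $x,y$ are adjacent. $U_G$ denotes the $\mathbb{F}$-vector space with basis $VG$ (formal linear combinations of vertices). A short functional is a nonzero linear functional $\lambda$ on $U_G$ satisfying: (1) if $x\neq y$ are nonadjacent vertices, then $\lambda(x)=0$ or $\lambda(y)=0$; (2) if $\lambda(x)\neq 0$, then $\lambda(x)=\sum_{t\sim x}\lambda(t)$, the sum over the vertices $t$ adjacent to $x$. (These are exactly the functionals $\lambda$ for which, with $\mu([x,y])=\lambda(x)\lambda(y)$ on edges, the map $u+\mathfrak{z}\mapsto\lambda(u)r+\mu(\mathfrak{z})\mathfrak{s}$ is a homomorphism of the normal graph algebra of $G$ into the algebra with basis $r,\mathfrak{s}$ and sole nonzero product $r^2=\mathfrak{s}$.) *)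

theory Defs
  imports Main
begin

definition simple_graph :: "'v set \<Rightarrow> ('v \<Rightarrow> 'v \<Rightarrow> bool) \<Rightarrow> bool" where
  "simple_graph V E \<longleftrightarrow> finite V \<and> (\<forall>x y. E x y \<longrightarrow> x \<in> V \<and> y \<in> V) \<and>
     (\<forall>x y. E x y \<longrightarrow> E y x) \<and> (\<forall>x. \<not> E x x)"

text \<open>A linear functional on U_G (vector space with basis V) is determined by its
values on the basis V; we represent it by lam :: 'v => 'f, only its values on V matter.\<close>
definition short_functional ::
  "'v set \<Rightarrow> ('v \<Rightarrow> 'v \<Rightarrow> bool) \<Rightarrow> ('v \<Rightarrow> 'f::field) \<Rightarrow> bool" where
  "short_functional V E lam \<longleftrightarrow>
     (\<exists>x\<in>V. lam x \<noteq> 0) \<and>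
     (\<forall>x\<in>V. \<forall>y\<in>V. x \<noteq> y \<and> \<not> E x y \<longrightarrow> lam x = 0 \<or> lam y = 0) \<and>
     (\<forall>x\<in>V. lam x \<noteq> 0 \<longrightarrow> lam x = (\<Sum>t\<in>{t\<in>V. E t x}. lam t))"

end

theory Submission
  imports Defs
begin

text \<open>The support \<open>S\<close> of a short functional \<open>\<lambda>\<close> is a clique, so at \<open>x \<in> S\<close> the
  neighbourhood condition says that \<open>\<lambda>(x)\<close> is the sum of \<open>\<lambda>\<close> over \<open>S - {x}\<close>, i.e. \<open>2 \<lambda>(x)\<close> is
  the sum of \<open>\<lambda>\<close> over \<open>S\<close>. As \<open>2 \<noteq> 0\<close>, \<open>\<lambda>\<close> is constant on \<open>S\<close>, and summing over \<open>S\<close> gives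
  \<open>|S| = 2\<close> in \<open>\<bbbF>\<close>; since \<open>|S| \<le> p < 2 + char \<bbbF>\<close>, in fact \<open>|S| = 2\<close>.\<close>

lemma of_nat_eq_2_imp_eq_2:
  assumes "CHAR('a::ring_1) \<noteq> 2"
    and "CHAR('a) = 0 \<or> n < 2 + CHAR('a)"
    and n2: "of_nat n = (2::'a)"
  shows "n = 2"
proof (cases n "2::nat" rule: linorder_cases)
  case less
  then have dvd: "CHAR('a) dvd 2 - n" and pos: "0 < 2 - n"
    using n2 of_nat_eq_iff_char_dvd[of n 2, where 'a='a] by auto
  have "0 < CHAR('a)" "CHAR('a) \<le> 2 - n"
    using dvd_pos_nat[OF pos dvd] dvd_imp_le[OF dvd pos] .
  with assms(1) CHAR_not_1[where 'a='a] show ?thesis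
    by linarith
next
  case greater
  then have dvd: "CHAR('a) dvd n - 2" and pos: "0 < n - 2"
    using n2 of_nat_eq_iff_char_dvd[of 2 n, where 'a='a] by auto
  have "0 < CHAR('a)" "CHAR('a) \<le> n - 2"
    using dvd_pos_nat[OF pos dvd] dvd_imp_le[OF dvd pos] .
  with assms(2) show ?thesis
    by linarith
qed

lemma two_neq_zero_if_CHAR_neq_2:
  assumes "CHAR('a::ring_1) \<noteq> 2"
  shows "(2::'a) \<noteq> 0"
  using of_nat_eq_2_imp_eq_2[OF assms, of 0] by auto

lemma short_functional_double_eq_sum_support:
  assumes "simple_graph V E" "short_functional V E lam"
    and x: "x \<in> V" "lam x \<noteq> 0"
  shows "2 * lam x = (\<Sum>t\<in>{t\<in>V. lam t \<noteq> 0}. lam t)"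
proof -
  let ?S = "{t\<in>V. lam t \<noteq> 0}"
  have fin: "finite V" and sym: "\<And>u v. E u v \<Longrightarrow> E v u" and irr: "\<And>u. \<not> E u u"
    using assms(1) unfolding simple_graph_def by blast+
  have clique: "\<And>u v. u \<in> ?S \<Longrightarrow> v \<in> ?S \<Longrightarrow> u \<noteq> v \<Longrightarrow> E u v"
    using assms(2) unfolding short_functional_def by blast
  have "lam x = (\<Sum>t\<in>{t\<in>V. E t x}. lam t)"
    using assms(2) x unfolding short_functional_def by blast
  also have "\<dots> = (\<Sum>t\<in>{t\<in>V. E t x} \<inter> ?S. lam t)"
    by (rule sum.mono_neutral_right) (use fin in auto)
  also have "{t\<in>V. E t x} \<inter> ?S = ?S - {x}"
    using x clique sym irr by auto
  also have "(\<Sum>t\<in>?S - {x}. lam t) = (\<Sum>t\<in>?S. lam t) - lam x"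
    using fin x by (simp add: sum_diff1)
  finally show ?thesis
    by (simp add: algebra_simps mult_2)
qed

lemma short_functional_constant_on_support:
  fixes lam :: "'v \<Rightarrow> 'f::field"
  assumes "simple_graph V E" "short_functional V E lam" "(2::'f) \<noteq> 0"
    and "x \<in> V" "lam x \<noteq> 0" "y \<in> V" "lam y \<noteq> 0"
  shows "lam x = lam y"
proof -
  have "2 * lam x = 2 * lam y"
    by (simp only: short_functional_double_eq_sum_support[OF assms(1,2,4,5)]
        short_functional_double_eq_sum_support[OF assms(1,2,6,7)])
  then show ?thesis
    using assms(3) by simp
qed

lemma short_functional_card_support:
  fixes lam :: "'v \<Rightarrow> 'f::field"
  assumes "simple_graph V E" "short_functional V E lam" "(2::'f) \<noteq> 0"
  shows "of_nat (card {x\<in>V. lam x \<noteq> 0}) = (2::'f)"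
proof -
  obtain x where x: "x \<in> V" "lam x \<noteq> 0"
    using assms(2) unfolding short_functional_def by blast
  have "of_nat (card {x\<in>V. lam x \<noteq> 0}) * lam x = (\<Sum>t\<in>{t\<in>V. lam t \<noteq> 0}. lam x)"
    by simp
  also have "\<dots> = (\<Sum>t\<in>{t\<in>V. lam t \<noteq> 0}. lam t)"
    using short_functional_constant_on_support[OF assms x] by (intro sum.cong refl) blast
  also have "\<dots> = 2 * lam x"
    using short_functional_double_eq_sum_support[OF assms(1,2) x] by simp
  finally show ?thesis
    by (rule mult_right_cancel[OF x(2), THEN iffD1])
qed

lemma short_functional_edge_indicator:
  assumes "simple_graph V E" "E a b" "\<alpha> \<noteq> 0" "lam a = \<alpha>" "lam b = \<alpha>"
    and zero: "\<forall>c\<in>V. c \<notin> {a, b} \<longrightarrow> lam c = 0"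
  shows "short_functional V E lam"
proof -
  have fin: "finite V" and EV: "\<And>u v. E u v \<Longrightarrow> u \<in> V \<and> v \<in> V"
    and sym: "\<And>u v. E u v \<Longrightarrow> E v u" and irr: "\<And>u. \<not> E u u"
    using assms(1) unfolding simple_graph_def by blast+
  have ab: "a \<noteq> b" "a \<in> V" "b \<in> V"
    using assms(2) irr EV by metis+
  have neighbour_sum: "(\<Sum>t\<in>{t\<in>V. E t x}. lam t) = lam y"
    if "x \<in> {a, b}" "y \<in> {a, b}" "x \<noteq> y" for x y
  proof -
    have "(\<Sum>t\<in>{t\<in>V. E t x}. lam t) = (\<Sum>t\<in>{y}. lam t)"
      by (rule sum.mono_neutral_left[symmetric])
        (use that fin ab zero irr assms(2) sym in auto)
    then show ?thesis
      by simp
  qed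
  have support: "x \<in> {a, b}" if "x \<in> V" "lam x \<noteq> 0" for x
    using that zero by blast
  show ?thesis
    unfolding short_functional_def
  proof (intro conjI ballI impI)
    show "\<exists>x\<in>V. lam x \<noteq> 0"
      using ab assms(3,4) by blast
  next
    fix x y
    assume "x \<in> V" "y \<in> V" "x \<noteq> y \<and> \<not> E x y"
    then show "lam x = 0 \<or> lam y = 0"
      using support[of x] support[of y] assms(2) sym by blast
  next
    fix x
    assume "x \<in> V" "lam x \<noteq> 0"
    then show "lam x = (\<Sum>t\<in>{t\<in>V. E t x}. lam t)"
      using support[of x] neighbour_sum[of a b] neighbour_sum[of b a] ab assms(4,5) by auto
  qed
qed

theorem theorem4p1:
  fixes V :: "'v set" and E :: "'v \<Rightarrow> 'v \<Rightarrow> bool" and lam :: "'v \<Rightarrow> 'f::field"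
  assumes "simple_graph V E"
    and "CHAR('f) \<noteq> 2"
    and "CHAR('f) = 0 \<or> card V < 2 + CHAR('f)"
  shows "short_functional V E lam \<longleftrightarrow>
    (\<exists>a b \<alpha>. E a b \<and> \<alpha> \<noteq> 0 \<and> lam a = \<alpha> \<and> lam b = \<alpha> \<and>
       (\<forall>c\<in>V. c \<notin> {a, b} \<longrightarrow> lam c = 0))"
proof
  assume sf: "short_functional V E lam"
  let ?S = "{x\<in>V. lam x \<noteq> 0}"
  have two: "(2::'f) \<noteq> 0"
    using two_neq_zero_if_CHAR_neq_2 assms(2) .
  have "card ?S \<le> card V"
    using assms(1) by (simp add: simple_graph_def card_mono)
  then have "card ?S = 2"
    using of_nat_eq_2_imp_eq_2 assms(2,3) short_functional_card_support[OF assms(1) sf two]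
    by fastforce
  then obtain a b where ab: "?S = {a, b}" "a \<noteq> b"
    by (auto simp: card_2_iff)
  then have "E a b" "lam a = lam b" "lam a \<noteq> 0"
    using sf short_functional_constant_on_support[OF assms(1) sf two, of a b]
    unfolding short_functional_def by blast+
  with ab show "\<exists>a b \<alpha>. E a b \<and> \<alpha> \<noteq> 0 \<and> lam a = \<alpha> \<and> lam b = \<alpha> \<and>
      (\<forall>c\<in>V. c \<notin> {a, b} \<longrightarrow> lam c = 0)"
    by blast
next
  assume "\<exists>a b \<alpha>. E a b \<and> \<alpha> \<noteq> 0 \<and> lam a = \<alpha> \<and> lam b = \<alpha> \<and>
      (\<forall>c\<in>V. c \<notin> {a, b} \<longrightarrow> lam c = 0)"
  then show "short_functional V E lam"
    using short_functional_edge_indicator[OF assms(1)] by blast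
qed

end
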